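(* Let $f:\mathbb{R}^n\to\mathbb{R}$ be continuously differentiable and bounded below, with $\nabla f$ Lipschitz continuous on $\mathbb{R}^n$ with constant $L(f)$, let $s$ be an integer with $0<s<n$, and let $L>L(f)$. Let $\mathbf{x}^*$ be an optimal solution of the problem (P): minimize $f(\mathbf{x})$ subject to $\|\mathbf{x}\|_0\le s$. Then (i) $\mathbf{x}^*$ is an $L$-stationary point of (P); and (ii) the set $P_{C_s}\!\left(\mathbf{x}^*-\frac1L\nabla f(\mathbf{x}^* )\right)$ consists of exactly one element.
   Context: $\|\mathbf{x}\|_0$ is the number of nonzero components of $\mathbf{x}$ and $C_s=\{\mathbf{x}:\|\mathbf{x}\|_0\le s\}$. For a closed set $D$, $P_D(\mathbf{y})=\operatorname{argmin}_{\mathbf{x}\in D}\|\mathbf{x}-\mathbf{y}\|^2$ (possibly multi-valued). A vector $\mathbf{x}^*\in C_s$ is an $L$-stationary point of (P) if $\mathbf{x}^*\in P_{C_s}\!\left(\mathbf{x}^*-\frac1L\nabla f(\mathbf{x}^* )\right)$. "$\nabla f$ Lipschitz with constant $L(f)$" means $\|\nabla f(\mathbf{x})-\nabla f(\mathbf{y})\|\le L(f)\|\mathbf{x}-\mathbf{y}\|$ for all $\mathbf{x},\mathbf{y}$. *)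

theory Defs
  imports "HOL-Analysis.Analysis"
begin

definition l0norm :: "real ^ 'n \<Rightarrow> nat" where
  "l0norm x = card {i. x $ i \<noteq> 0}"

definition sparse_set :: "nat \<Rightarrow> (real ^ 'n) set" where
  "sparse_set s = {x. l0norm x \<le> s}"

definition proj_set :: "(real ^ 'n) set \<Rightarrow> real ^ 'n \<Rightarrow> (real ^ 'n) set" where
  "proj_set D y = {x \<in> D. \<forall>z \<in> D. (norm (x - y))\<^sup>2 \<le> (norm (z - y))\<^sup>2}"

definition L_stationary :: "real \<Rightarrow> (real ^ 'n \<Rightarrow> real ^ 'n) \<Rightarrow> nat \<Rightarrow> real ^ 'n \<Rightarrow> bool" where
  "L_stationary L g s x \<longleftrightarrow> x \<in> sparse_set s \<and>
     x \<in> proj_set (sparse_set s) (x - (1 / L) *\<^sub>R g x)"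

end

theory Submission
  imports Defs
begin

text \<open>The projection of the gradient step from an optimal point \<open>x\<^sup>*\<close> onto \<open>C\<^sub>s\<close> can only
  be \<open>x\<^sup>*\<close> itself: a minimiser \<open>z\<close> of the distance to \<open>x\<^sup>* - \<nabla>f(x\<^sup>*)/L\<close> satisfies
  \<open>\<nabla>f(x\<^sup>*)\<cdot>(z - x\<^sup>*) \<le> -L/2 \<parallel>z - x\<^sup>*\<parallel>\<^sup>2\<close>, and the descent lemma then gives
  \<open>f z \<le> f x\<^sup>* - (L - L(f))/2 \<parallel>z - x\<^sup>*\<parallel>\<^sup>2\<close>, which contradicts optimality unless \<open>z = x\<^sup>*\<close>.
  Since \<open>C\<^sub>s\<close> is closed and nonempty, the projection is nonempty, so it is exactly \<open>{x\<^sup>*}\<close>.\<close>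

lemma descent_lemma:
  fixes f :: "'a::real_inner \<Rightarrow> real"
  assumes grad: "\<And>x. (f has_derivative (\<lambda>h. g x \<bullet> h)) (at x)"
    and lip: "\<And>x y. norm (g x - g y) \<le> Lf * norm (x - y)"
  shows "f y \<le> f x + g x \<bullet> (y - x) + Lf / 2 * (norm (y - x))\<^sup>2"
proof -
  define d where "d = y - x"
  define \<phi> where "\<phi> t = f (x + t *\<^sub>R d) - t * (g x \<bullet> d) - Lf / 2 * t\<^sup>2 * (norm d)\<^sup>2" for t
  have \<phi>_deriv: "(\<phi> has_real_derivative (g (x + t *\<^sub>R d) - g x) \<bullet> d - Lf * t * (norm d)\<^sup>2) (at t)"
    for t
  proof -
    have "((\<lambda>t. f (x + t *\<^sub>R d)) has_derivative (\<lambda>h. g (x + t *\<^sub>R d) \<bullet> (h *\<^sub>R d))) (at t)"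
      by (rule has_derivative_compose[OF _ grad]) (auto intro!: derivative_eq_intros)
    then have "((\<lambda>t. f (x + t *\<^sub>R d)) has_real_derivative g (x + t *\<^sub>R d) \<bullet> d) (at t)"
      by (simp add: has_field_derivative_def mult_commute_abs)
    then show ?thesis
      unfolding \<phi>_def
      by (auto intro!: derivative_eq_intros simp: algebra_simps inner_diff_left)
  qed
  have "\<phi> 1 \<le> \<phi> 0"
  proof (rule DERIV_nonpos_imp_nonincreasing[of 0 1])
    fix t :: real assume t: "0 \<le> t" "t \<le> 1"
    have "(g (x + t *\<^sub>R d) - g x) \<bullet> d \<le> norm (g (x + t *\<^sub>R d) - g x) * norm d"
      by (rule norm_cauchy_schwarz)
    also have "\<dots> \<le> Lf * norm (t *\<^sub>R d) * norm d"
      using lip[of "x + t *\<^sub>R d" x] by (intro mult_right_mono) auto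
    also have "\<dots> = Lf * t * (norm d)\<^sup>2"
      using t by (simp add: power2_eq_square)
    finally show "\<exists>D. (\<phi> has_real_derivative D) (at t) \<and> D \<le> 0"
      using \<phi>_deriv[of t] by auto
  qed simp
  then show ?thesis
    unfolding \<phi>_def d_def by (simp add: algebra_simps)
qed

lemma lipschitz_constant_nonneg:
  fixes g :: "'a::euclidean_space \<Rightarrow> 'b::real_normed_vector"
  assumes lip: "\<And>x y. norm (g x - g y) \<le> Lf * norm (x - y)"
  shows "0 \<le> Lf"
proof -
  obtain b :: 'a where "b \<in> Basis"
    using nonempty_Basis by blast
  then have "norm (g b - g 0) \<le> Lf"
    using lip[of b 0] by simp
  then show ?thesis
    using norm_ge_zero order_trans by blast
qed

lemma closed_sparse_set: "closed (sparse_set s :: (real ^ 'n) set)"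
proof -
  have "sparse_set s = (\<Union>I\<in>{I. card I \<le> s}. \<Inter>i\<in>-I. {x :: real ^ 'n. x $ i = 0})"
  proof (intro set_eqI iffI)
    fix x :: "real ^ 'n"
    assume "x \<in> sparse_set s"
    then show "x \<in> (\<Union>I\<in>{I. card I \<le> s}. \<Inter>i\<in>-I. {x. x $ i = 0})"
      unfolding sparse_set_def l0norm_def by (intro UN_I[of "{i. x $ i \<noteq> 0}"]) auto
  next
    fix x :: "real ^ 'n"
    assume "x \<in> (\<Union>I\<in>{I. card I \<le> s}. \<Inter>i\<in>-I. {x. x $ i = 0})"
    then obtain I where "card I \<le> s" and "\<forall>i\<in>-I. x $ i = 0"
      by auto
    moreover from this have "card {i. x $ i \<noteq> 0} \<le> card I"
      by (intro card_mono) auto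
    ultimately show "x \<in> sparse_set s"
      unfolding sparse_set_def l0norm_def by auto
  qed
  moreover have "closed {x :: real ^ 'n. x $ i = 0}" for i
    by (intro closed_Collect_eq continuous_intros)
  ultimately show ?thesis
    by (auto intro!: closed_UN closed_INT)
qed

lemma proj_set_nonempty:
  assumes "closed D" and "D \<noteq> {}"
  shows "proj_set D y \<noteq> {}"
proof -
  obtain z where "z \<in> D" and z_min: "\<And>w. w \<in> D \<Longrightarrow> dist y z \<le> dist y w"
    using distance_attains_inf[OF assms] by blast
  have "(norm (z - y))\<^sup>2 \<le> (norm (w - y))\<^sup>2" if "w \<in> D" for w
    using z_min[OF that] by (intro power_mono) (auto simp: dist_norm norm_minus_commute)
  with \<open>z \<in> D\<close> show ?thesis
    unfolding proj_set_def by blast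
qed

lemma proj_set_gradient_step_decrease:
  assumes "z \<in> proj_set D (x - (1 / L) *\<^sub>R v)" and "x \<in> D" and "0 < L"
  shows "v \<bullet> (z - x) \<le> - (L / 2 * (norm (z - x))\<^sup>2)"
proof -
  have "(norm (z - x + (1 / L) *\<^sub>R v))\<^sup>2 \<le> (norm ((1 / L) *\<^sub>R v))\<^sup>2"
    using assms(1,2) unfolding proj_set_def by (auto simp: algebra_simps)
  then have "(norm (z - x))\<^sup>2 + 2 / L * (v \<bullet> (z - x)) \<le> 0"
    unfolding power2_norm_eq_inner by (simp add: inner_add inner_commute algebra_simps)
  then have "L / 2 * ((norm (z - x))\<^sup>2 + 2 / L * (v \<bullet> (z - x))) \<le> 0"
    using \<open>0 < L\<close> by (simp add: mult_nonneg_nonpos)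
  also have "L / 2 * ((norm (z - x))\<^sup>2 + 2 / L * (v \<bullet> (z - x)))
      = L / 2 * (norm (z - x))\<^sup>2 + v \<bullet> (z - x)"
    using \<open>0 < L\<close> by (simp add: field_simps)
  finally show ?thesis
    by linarith
qed

lemma optimal_point_is_gradient_projection:
  fixes f :: "real ^ 'n \<Rightarrow> real"
  assumes grad: "\<And>x. (f has_derivative (\<lambda>h. g x \<bullet> h)) (at x)"
    and lip: "\<And>x y. norm (g x - g y) \<le> Lf * norm (x - y)"
    and "Lf < L" and "0 < L"
    and "x \<in> D" and opt: "\<And>w. w \<in> D \<Longrightarrow> f x \<le> f w"
    and z: "z \<in> proj_set D (x - (1 / L) *\<^sub>R g x)"
  shows "z = x"
proof -
  have "z \<in> D"
    using z unfolding proj_set_def by blast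
  have "f x \<le> f z"
    using opt[OF \<open>z \<in> D\<close>] .
  also have "\<dots> \<le> f x + g x \<bullet> (z - x) + Lf / 2 * (norm (z - x))\<^sup>2"
    by (rule descent_lemma[OF grad lip])
  also have "\<dots> \<le> f x - (L - Lf) / 2 * (norm (z - x))\<^sup>2"
    using proj_set_gradient_step_decrease[OF z \<open>x \<in> D\<close> \<open>0 < L\<close>] by (simp add: field_simps)
  finally have "(L - Lf) / 2 * (norm (z - x))\<^sup>2 \<le> 0"
    by simp
  with \<open>Lf < L\<close> show ?thesis
    by (simp add: mult_le_0_iff)
qed

theorem theorem2p2:
  fixes f :: "real ^ 'n \<Rightarrow> real"
    and g :: "real ^ 'n \<Rightarrow> real ^ 'n"
    and Lf L :: real and s :: nat and xstar :: "real ^ 'n"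
  assumes grad: "\<And>x. (f has_derivative (\<lambda>h. g x \<bullet> h)) (at x)"
    and cont: "continuous_on UNIV g"
    and bdd: "bdd_below (range f)"
    and lip: "\<And>x y. norm (g x - g y) \<le> Lf * norm (x - y)"
    and s_pos: "0 < s" and s_lt: "s < CARD('n)"
    and L_gt: "L > Lf"
    and opt_feas: "xstar \<in> sparse_set s"
    and opt: "\<And>x. x \<in> sparse_set s \<Longrightarrow> f xstar \<le> f x"
  shows "L_stationary L g s xstar \<and>
         (\<exists>!z. z \<in> proj_set (sparse_set s) (xstar - (1 / L) *\<^sub>R g xstar))"
proof -
  let ?P = "proj_set (sparse_set s) (xstar - (1 / L) *\<^sub>R g xstar)"
  have "0 < L"
    using lipschitz_constant_nonneg[OF lip] L_gt by linarith
  have proj_eq: "z = xstar" if "z \<in> ?P" for z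
    by (rule optimal_point_is_gradient_projection[OF grad lip L_gt \<open>0 < L\<close> opt_feas opt that])
  obtain z where "z \<in> ?P"
    using proj_set_nonempty[OF closed_sparse_set] opt_feas by blast
  then have "xstar \<in> ?P"
    using proj_eq by blast
  then show ?thesis
    unfolding L_stationary_def using opt_feas proj_eq by blast
qed

end
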